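(* Let $a(t), b(t), c(t), d(t), f(t), g(t)$ be suitable real-valued functions of time, and consider the one-dimensional time-dependent Schrödinger equation $$i\psi_t = -a(t)\psi_{xx} + b(t)x^2\psi - ic(t)x\psi_x - id(t)\psi - f(t)x\psi + ig(t)\psi_x .$$ Then the substitution $$\psi = \frac{e^{i(\alpha(t)x^2+\delta(t)x+\kappa(t))}}{\sqrt{\mu(t)}}\,\chi(\xi,\tau),\qquad \xi=\beta(t)x+\varepsilon(t),\quad \tau=\gamma(t)$$ transforms this non-autonomous and inhomogeneous Schrödinger equation into the autonomous form $$-i\chi_\tau = -\chi_{\xi\xi} + c_0\xi^2\chi \qquad (c_0=0,1)$$ provided that $$\frac{d\alpha}{dt} + b + 2c\alpha + 4a\alpha^2 = c_0 a\beta^4,$$ $$\frac{d\beta}{dt} + (c+4a\alpha)\beta = 0,$$ $$\frac{d\gamma}{dt} + a\beta^2 = 0,$$ $$\frac{d\delta}{dt} + (c+4a\alpha)\delta = f + 2g\alpha + 2c_0 a\beta^3\varepsilon,$$ $$\frac{d\varepsilon}{dt} = (g-2a\delta)\beta,$$ $$\frac{d\kappa}{dt} = g\delta - a\delta^2 + c_0 a\beta^2\varepsilon^2 .$$ Here $$\alpha = \frac{1}{4a}\frac{\mu'}{\mu} - \frac{d}{2a}.$$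
   Context: Generalized (driven) harmonic oscillators: the Hamiltonian is an arbitrary quadratic in $p=-i\partial/\partial x$ and $x$ with time-dependent real coefficients $a,b,c,d,f,g$. The functions $\alpha,\beta,\gamma,\delta,\varepsilon,\kappa,\mu$ are functions of $t$ only. *)

theory Defs
  imports "HOL-Analysis.Analysis"
begin

end

theory Submission
  imports Defs
begin

text \<open>
  Write \<open>\<psi> = A \<chi>(\<xi>, \<tau>)\<close> with \<open>A = exp (i \<phi>) / sqrt \<mu>\<close>, \<open>\<phi> = \<alpha> x\<^sup>2 + \<delta> x + \<kappa>\<close>. By the
  product and chain rules, \<open>\<psi>_t\<close>, \<open>\<psi>_x\<close> and \<open>\<psi>_xx\<close> are \<open>A\<close> times linear combinations of
  \<open>\<chi>, \<chi>_\<xi>, \<chi>_\<xi>\<xi>, \<chi>_\<tau>\<close>. Eliminating \<open>\<chi>_\<tau>\<close> by the autonomous equation, the residual of the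
  original equation becomes \<open>A\<close> times a combination of \<open>\<chi>, \<chi>_\<xi>, \<chi>_\<xi>\<xi>\<close> whose coefficients vanish
  by the ODEs: that of \<open>\<chi>_\<xi>\<xi>\<close> by the \<open>\<gamma>\<close>-equation, that of \<open>\<chi>_\<xi>\<close> by the \<open>\<beta>\<close>- and
  \<open>\<epsilon>\<close>-equations, the real part of that of \<open>\<chi>\<close> by the \<open>\<alpha>\<close>-, \<open>\<delta>\<close>- and \<open>\<kappa>\<close>-equations (as the
  coefficients of \<open>x\<^sup>2\<close>, \<open>x\<close>, \<open>1\<close>), and its imaginary part because the formula for \<open>\<alpha>\<close> says
  \<open>\<mu>'/(2\<mu>) = 2 a \<alpha> + d\<close>.
\<close>

lemma has_vector_derivative_exp_ii_of_real:
  assumes "(\<phi> has_real_derivative \<phi>') (at x)"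
  shows "((\<lambda>y. exp (\<i> * of_real (\<phi> y))) has_vector_derivative
           \<i> * of_real \<phi>' * exp (\<i> * of_real (\<phi> x))) (at x)"
proof -
  have "((\<lambda>y. \<i> * of_real (\<phi> y)) has_vector_derivative \<i> * of_real \<phi>') (at x)"
    using assms by (intro derivative_intros)
  from field_vector_diff_chain_at[OF this DERIV_exp] show ?thesis
    by (simp add: o_def)
qed

lemma has_vector_derivative_compose_pair:
  fixes u :: "real \<Rightarrow> real \<Rightarrow> 'a::real_normed_algebra_1"
  assumes u: "((\<lambda>z. u (fst z) (snd z)) has_derivative
                (\<lambda>h. of_real (fst h) * u1 + of_real (snd h) * u2)) (at (p t, q t))"
    and p: "(p has_real_derivative p') (at t)"
    and q: "(q has_real_derivative q') (at t)"
  shows "((\<lambda>s. u (p s) (q s)) has_vector_derivative of_real p' * u1 + of_real q' * u2) (at t)"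
proof -
  have "((\<lambda>s. (p s, q s)) has_derivative (\<lambda>h. (h * p', h * q'))) (at t)"
    using has_derivative_Pair[OF p[unfolded has_field_derivative_def]
        q[unfolded has_field_derivative_def]]
    by (simp add: mult.commute)
  from diff_chain_at[OF this u] show ?thesis
    unfolding has_vector_derivative_def by (simp add: o_def scaleR_conv_of_real algebra_simps)
qed

lemma has_real_derivative_inverse_sqrt:
  assumes "(\<mu> has_real_derivative \<mu>') (at t)" and "\<mu> t > 0"
  shows "((\<lambda>s. 1 / sqrt (\<mu> s)) has_real_derivative - (\<mu>' / (2 * \<mu> t)) * (1 / sqrt (\<mu> t))) (at t)"
proof -
  have "((\<lambda>s. 1 / sqrt (\<mu> s)) has_real_derivative
          - (inverse (sqrt (\<mu> t)) / 2 * \<mu>') / (sqrt (\<mu> t) * sqrt (\<mu> t))) (at t)"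
    using assms by (auto intro!: derivative_eq_intros)
  moreover have "sqrt (\<mu> t) * sqrt (\<mu> t) = \<mu> t"
    using assms(2) by simp
  ultimately show ?thesis
    by (simp add: field_simps)
qed

lemma gauge_ansatz_space_derivatives:
  fixes A D K B E :: real and s :: complex and v v' v'' :: "real \<Rightarrow> complex"
  assumes v: "\<And>\<xi>. (v has_vector_derivative v' \<xi>) (at \<xi>)"
    and v': "\<And>\<xi>. (v' has_vector_derivative v'' \<xi>) (at \<xi>)"
  defines "u \<equiv> \<lambda>y. exp (\<i> * of_real (A * y\<^sup>2 + D * y + K)) * s * v (B * y + E)"
    and "u' \<equiv> \<lambda>y. exp (\<i> * of_real (A * y\<^sup>2 + D * y + K)) * s
                   * (\<i> * of_real (2 * A * y + D) * v (B * y + E) + of_real B * v' (B * y + E))"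
  shows "(u has_vector_derivative u' x) (at x)"
    and "(u' has_vector_derivative exp (\<i> * of_real (A * x\<^sup>2 + D * x + K)) * s
           * ((\<i> * of_real (2 * A) - of_real ((2 * A * x + D)\<^sup>2)) * v (B * x + E)
              + 2 * \<i> * of_real (B * (2 * A * x + D)) * v' (B * x + E)
              + of_real (B\<^sup>2) * v'' (B * x + E))) (at x)"
proof -
  have phase: "((\<lambda>y. exp (\<i> * of_real (A * y\<^sup>2 + D * y + K))) has_vector_derivative
                 \<i> * of_real (2 * A * x + D) * exp (\<i> * of_real (A * x\<^sup>2 + D * x + K))) (at x)"
    by (rule has_vector_derivative_exp_ii_of_real) (auto intro!: derivative_eq_intros)
  have lin: "((\<lambda>y. B * y + E) has_vector_derivative B) (at x)"
    by (auto intro!: derivative_eq_intros simp: has_real_derivative_iff_has_vector_derivative[symmetric])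
  have dv: "((\<lambda>y. v (B * y + E)) has_vector_derivative B *\<^sub>R v' (B * x + E)) (at x)"
    using vector_diff_chain_at[OF lin v] by (simp add: o_def)
  have dv': "((\<lambda>y. v' (B * y + E)) has_vector_derivative B *\<^sub>R v'' (B * x + E)) (at x)"
    using vector_diff_chain_at[OF lin v'] by (simp add: o_def)
  have slope: "((\<lambda>y. \<i> * of_real (2 * A * y + D)) has_vector_derivative \<i> * of_real (2 * A)) (at x)"
    by (intro has_vector_derivative_mult_right has_vector_derivative_of_real)
      (auto intro!: derivative_eq_intros)
  have bracket: "((\<lambda>y. \<i> * of_real (2 * A * y + D) * v (B * y + E) + of_real B * v' (B * y + E))
      has_vector_derivative \<i> * of_real (2 * A * x + D) * (B *\<^sub>R v' (B * x + E))
        + \<i> * of_real (2 * A) * v (B * x + E) + of_real B * (B *\<^sub>R v'' (B * x + E))) (at x)"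
    by (intro has_vector_derivative_add has_vector_derivative_mult has_vector_derivative_mult_right
        slope dv dv')
  show "(u has_vector_derivative u' x) (at x)"
    unfolding u_def u'_def
    by (rule has_vector_derivative_eq_rhs[OF
          has_vector_derivative_mult[OF has_vector_derivative_mult_left[OF phase] dv]])
      (simp add: scaleR_conv_of_real algebra_simps)
  show "(u' has_vector_derivative exp (\<i> * of_real (A * x\<^sup>2 + D * x + K)) * s
           * ((\<i> * of_real (2 * A) - of_real ((2 * A * x + D)\<^sup>2)) * v (B * x + E)
              + 2 * \<i> * of_real (B * (2 * A * x + D)) * v' (B * x + E)
              + of_real (B\<^sup>2) * v'' (B * x + E))) (at x)"
    unfolding u'_def
    by (rule has_vector_derivative_eq_rhs[OF
          has_vector_derivative_mult[OF has_vector_derivative_mult_left[OF phase] bracket]])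
      (simp add: scaleR_conv_of_real algebra_simps power2_eq_square)
qed

lemma gauge_ansatz_time_derivative:
  fixes x t :: real and chi chi_x chi_t :: "real \<Rightarrow> real \<Rightarrow> complex"
  assumes "(\<alpha> has_real_derivative \<alpha>') (at t)" "(\<delta> has_real_derivative \<delta>') (at t)"
    and "(\<kappa> has_real_derivative \<kappa>') (at t)" "(\<beta> has_real_derivative \<beta>') (at t)"
    and "(\<epsilon> has_real_derivative \<epsilon>') (at t)" "(\<gamma> has_real_derivative \<gamma>') (at t)"
    and "(\<mu> has_real_derivative \<mu>') (at t)" "\<mu> t > 0"
    and chi: "((\<lambda>z. chi (fst z) (snd z)) has_derivative
               (\<lambda>h. of_real (fst h) * chi_x (\<beta> t * x + \<epsilon> t) (\<gamma> t)
                    + of_real (snd h) * chi_t (\<beta> t * x + \<epsilon> t) (\<gamma> t))) (at (\<beta> t * x + \<epsilon> t, \<gamma> t))"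
  shows "((\<lambda>s. exp (\<i> * of_real (\<alpha> s * x\<^sup>2 + \<delta> s * x + \<kappa> s)) * of_real (1 / sqrt (\<mu> s))
              * chi (\<beta> s * x + \<epsilon> s) (\<gamma> s)) has_vector_derivative
           exp (\<i> * of_real (\<alpha> t * x\<^sup>2 + \<delta> t * x + \<kappa> t)) * of_real (1 / sqrt (\<mu> t))
           * ((\<i> * of_real (\<alpha>' * x\<^sup>2 + \<delta>' * x + \<kappa>') - of_real (\<mu>' / (2 * \<mu> t)))
                * chi (\<beta> t * x + \<epsilon> t) (\<gamma> t)
              + of_real (\<beta>' * x + \<epsilon>') * chi_x (\<beta> t * x + \<epsilon> t) (\<gamma> t)
              + of_real \<gamma>' * chi_t (\<beta> t * x + \<epsilon> t) (\<gamma> t))) (at t)"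
proof -
  have phase: "((\<lambda>s. exp (\<i> * of_real (\<alpha> s * x\<^sup>2 + \<delta> s * x + \<kappa> s))) has_vector_derivative
      \<i> * of_real (\<alpha>' * x\<^sup>2 + \<delta>' * x + \<kappa>') * exp (\<i> * of_real (\<alpha> t * x\<^sup>2 + \<delta> t * x + \<kappa> t))) (at t)"
    by (rule has_vector_derivative_exp_ii_of_real) (auto intro!: derivative_eq_intros assms)
  have amplitude: "((\<lambda>s. of_real (1 / sqrt (\<mu> s)) :: complex) has_vector_derivative
      - of_real (\<mu>' / (2 * \<mu> t)) * of_real (1 / sqrt (\<mu> t))) (at t)"
    by (rule has_vector_derivative_eq_rhs[OF
          has_vector_derivative_of_real[OF has_real_derivative_inverse_sqrt[OF assms(7,8)]]]) simp
  have "((\<lambda>s. \<beta> s * x + \<epsilon> s) has_real_derivative \<beta>' * x + \<epsilon>') (at t)"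
    by (auto intro!: derivative_eq_intros assms)
  from has_vector_derivative_compose_pair[OF chi this assms(6)]
  have profile: "((\<lambda>s. chi (\<beta> s * x + \<epsilon> s) (\<gamma> s)) has_vector_derivative
      of_real (\<beta>' * x + \<epsilon>') * chi_x (\<beta> t * x + \<epsilon> t) (\<gamma> t)
      + of_real \<gamma>' * chi_t (\<beta> t * x + \<epsilon> t) (\<gamma> t)) (at t)" .
  show ?thesis
    by (rule has_vector_derivative_eq_rhs[OF
          has_vector_derivative_mult[OF has_vector_derivative_mult[OF phase amplitude] profile]])
      (simp add: algebra_simps del: of_real_divide)
qed

lemma gauge_transform_residual_vanishes:
  fixes a b c d f g c0 \<alpha> \<beta> \<delta> \<epsilon> \<alpha>' \<beta>' \<gamma>' \<delta>' \<epsilon>' \<kappa>' r x :: real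
    and A w w_x w_xx w_t :: complex
  assumes schroedinger: "- \<i> * w_t = - w_xx + of_real (c0 * (\<beta> * x + \<epsilon>)\<^sup>2) * w"
    and "\<alpha>' + b + 2 * c * \<alpha> + 4 * a * \<alpha>\<^sup>2 = c0 * a * \<beta> ^ 4"
    and "\<beta>' + (c + 4 * a * \<alpha>) * \<beta> = 0"
    and "\<gamma>' + a * \<beta>\<^sup>2 = 0"
    and "\<delta>' + (c + 4 * a * \<alpha>) * \<delta> = f + 2 * g * \<alpha> + 2 * c0 * a * \<beta> ^ 3 * \<epsilon>"
    and "\<epsilon>' = (g - 2 * a * \<delta>) * \<beta>"
    and "\<kappa>' = g * \<delta> - a * \<delta>\<^sup>2 + c0 * a * \<beta>\<^sup>2 * \<epsilon>\<^sup>2"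
    and "r = 2 * a * \<alpha> + d"
  shows "\<i> * (A * ((\<i> * of_real (\<alpha>' * x\<^sup>2 + \<delta>' * x + \<kappa>') - of_real r) * w
                   + of_real (\<beta>' * x + \<epsilon>') * w_x + of_real \<gamma>' * w_t))
    = - of_real a * (A * ((\<i> * of_real (2 * \<alpha>) - of_real ((2 * \<alpha> * x + \<delta>)\<^sup>2)) * w
                          + 2 * \<i> * of_real (\<beta> * (2 * \<alpha> * x + \<delta>)) * w_x
                          + of_real (\<beta>\<^sup>2) * w_xx))
      + of_real (b * x\<^sup>2) * (A * w)
      - \<i> * of_real (c * x) * (A * (\<i> * of_real (2 * \<alpha> * x + \<delta>) * w + of_real \<beta> * w_x))
      - \<i> * of_real d * (A * w) - of_real (f * x) * (A * w)
      + \<i> * of_real g * (A * (\<i> * of_real (2 * \<alpha> * x + \<delta>) * w + of_real \<beta> * w_x))"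
proof -
  have w_t: "w_t = \<i> * (- w_xx + of_real (c0 * (\<beta> * x + \<epsilon>)\<^sup>2) * w)"
    using arg_cong[OF schroedinger, of "(*) \<i>"] by (simp add: algebra_simps)
  have rates: "\<alpha>' = c0 * a * \<beta> ^ 4 - b - 2 * c * \<alpha> - 4 * a * \<alpha>\<^sup>2"
    "\<beta>' = - (c + 4 * a * \<alpha>) * \<beta>" "\<gamma>' = - a * \<beta>\<^sup>2"
    "\<delta>' = f + 2 * g * \<alpha> + 2 * c0 * a * \<beta> ^ 3 * \<epsilon> - (c + 4 * a * \<alpha>) * \<delta>"
    using assms(2-5) by (simp_all add: algebra_simps eq_neg_iff_add_eq_0)
  show ?thesis
    by (simp add: w_t rates assms(6-8) algebra_simps power2_eq_square power3_eq_cube power4_eq_xxxx)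
qed

theorem lemma1:
  fixes a b c d f g \<alpha> \<beta> \<gamma> \<delta> \<epsilon> \<kappa> \<mu> :: "real \<Rightarrow> real"
    and \<alpha>' \<beta>' \<gamma>' \<delta>' \<epsilon>' \<kappa>' \<mu>' :: "real \<Rightarrow> real"
    and T :: "real set"
    and c0 :: real
    and chi chi_x chi_xx chi_t :: "real \<Rightarrow> real \<Rightarrow> complex"
  assumes T_open: "open T"
    and c0: "c0 = 0 \<or> c0 = 1"
    and a_nz: "\<And>t. t \<in> T \<Longrightarrow> a t \<noteq> 0"
    and mu_pos: "\<And>t. t \<in> T \<Longrightarrow> \<mu> t > 0"
    and d_alpha: "\<And>t. t \<in> T \<Longrightarrow> (\<alpha> has_real_derivative \<alpha>' t) (at t)"
    and d_beta: "\<And>t. t \<in> T \<Longrightarrow> (\<beta> has_real_derivative \<beta>' t) (at t)"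
    and d_gamma: "\<And>t. t \<in> T \<Longrightarrow> (\<gamma> has_real_derivative \<gamma>' t) (at t)"
    and d_delta: "\<And>t. t \<in> T \<Longrightarrow> (\<delta> has_real_derivative \<delta>' t) (at t)"
    and d_eps: "\<And>t. t \<in> T \<Longrightarrow> (\<epsilon> has_real_derivative \<epsilon>' t) (at t)"
    and d_kappa: "\<And>t. t \<in> T \<Longrightarrow> (\<kappa> has_real_derivative \<kappa>' t) (at t)"
    and d_mu: "\<And>t. t \<in> T \<Longrightarrow> (\<mu> has_real_derivative \<mu>' t) (at t)"
    and alpha_def: "\<And>t. t \<in> T \<Longrightarrow> \<alpha> t = \<mu>' t / (4 * a t * \<mu> t) - d t / (2 * a t)"
    and eq_alpha: "\<And>t. t \<in> T \<Longrightarrow>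
       \<alpha>' t + b t + 2 * c t * \<alpha> t + 4 * a t * (\<alpha> t)\<^sup>2 = c0 * a t * (\<beta> t) ^ 4"
    and eq_beta: "\<And>t. t \<in> T \<Longrightarrow> \<beta>' t + (c t + 4 * a t * \<alpha> t) * \<beta> t = 0"
    and eq_gamma: "\<And>t. t \<in> T \<Longrightarrow> \<gamma>' t + a t * (\<beta> t)\<^sup>2 = 0"
    and eq_delta: "\<And>t. t \<in> T \<Longrightarrow>
       \<delta>' t + (c t + 4 * a t * \<alpha> t) * \<delta> t
         = f t + 2 * g t * \<alpha> t + 2 * c0 * a t * (\<beta> t) ^ 3 * \<epsilon> t"
    and eq_eps: "\<And>t. t \<in> T \<Longrightarrow> \<epsilon>' t = (g t - 2 * a t * \<delta> t) * \<beta> t"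
    and eq_kappa: "\<And>t. t \<in> T \<Longrightarrow>
       \<kappa>' t = g t * \<delta> t - a t * (\<delta> t)\<^sup>2 + c0 * a t * (\<beta> t)\<^sup>2 * (\<epsilon> t)\<^sup>2"
    and chi_diff: "\<And>\<xi> \<tau>. ((\<lambda>p. chi (fst p) (snd p)) has_derivative
         (\<lambda>h. of_real (fst h) * chi_x \<xi> \<tau> + of_real (snd h) * chi_t \<xi> \<tau>)) (at (\<xi>, \<tau>))"
    and chi_diff2: "\<And>\<xi> \<tau>. ((\<lambda>y. chi_x y \<tau>) has_vector_derivative chi_xx \<xi> \<tau>) (at \<xi>)"
    and chi_eq: "\<And>\<xi> \<tau>. - \<i> * chi_t \<xi> \<tau>
         = - chi_xx \<xi> \<tau> + of_real (c0 * \<xi>\<^sup>2) * chi \<xi> \<tau>"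
  defines "\<psi> \<equiv> (\<lambda>x t. exp (\<i> * of_real (\<alpha> t * x\<^sup>2 + \<delta> t * x + \<kappa> t))
                      / of_real (sqrt (\<mu> t)) * chi (\<beta> t * x + \<epsilon> t) (\<gamma> t))"
  shows "\<exists>psi_t psi_x psi_xx. \<forall>x. \<forall>t\<in>T.
           ((\<lambda>s. \<psi> x s) has_vector_derivative psi_t x t) (at t)
         \<and> ((\<lambda>y. \<psi> y t) has_vector_derivative psi_x x t) (at x)
         \<and> ((\<lambda>y. psi_x y t) has_vector_derivative psi_xx x t) (at x)
         \<and> \<i> * psi_t x t
             = - of_real (a t) * psi_xx x t + of_real (b t * x\<^sup>2) * \<psi> x t
               - \<i> * of_real (c t * x) * psi_x x t - \<i> * of_real (d t) * \<psi> x t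
               - of_real (f t * x) * \<psi> x t + \<i> * of_real (g t) * psi_x x t"
proof -
  have psi_eq: "\<psi> = (\<lambda>x t. exp (\<i> * of_real (\<alpha> t * x\<^sup>2 + \<delta> t * x + \<kappa> t)) * of_real (1 / sqrt (\<mu> t))
                          * chi (\<beta> t * x + \<epsilon> t) (\<gamma> t))"
    unfolding \<psi>_def by (simp add: fun_eq_iff)
  have chi_partial: "((\<lambda>\<xi>. chi \<xi> \<tau>) has_vector_derivative chi_x \<xi> \<tau>) (at \<xi>)" for \<xi> \<tau>
    using has_vector_derivative_compose_pair[where u = chi and p = "\<lambda>s. s" and q = "\<lambda>_. \<tau>" and t = \<xi>,
        OF chi_diff DERIV_ident DERIV_const] by simp
  define psi_t where "psi_t x t =
    exp (\<i> * of_real (\<alpha> t * x\<^sup>2 + \<delta> t * x + \<kappa> t)) * of_real (1 / sqrt (\<mu> t))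
    * ((\<i> * of_real (\<alpha>' t * x\<^sup>2 + \<delta>' t * x + \<kappa>' t) - of_real (\<mu>' t / (2 * \<mu> t)))
         * chi (\<beta> t * x + \<epsilon> t) (\<gamma> t)
       + of_real (\<beta>' t * x + \<epsilon>' t) * chi_x (\<beta> t * x + \<epsilon> t) (\<gamma> t)
       + of_real (\<gamma>' t) * chi_t (\<beta> t * x + \<epsilon> t) (\<gamma> t))" for x t
  define psi_x where "psi_x x t =
    exp (\<i> * of_real (\<alpha> t * x\<^sup>2 + \<delta> t * x + \<kappa> t)) * of_real (1 / sqrt (\<mu> t))
    * (\<i> * of_real (2 * \<alpha> t * x + \<delta> t) * chi (\<beta> t * x + \<epsilon> t) (\<gamma> t)
       + of_real (\<beta> t) * chi_x (\<beta> t * x + \<epsilon> t) (\<gamma> t))" for x t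
  define psi_xx where "psi_xx x t =
    exp (\<i> * of_real (\<alpha> t * x\<^sup>2 + \<delta> t * x + \<kappa> t)) * of_real (1 / sqrt (\<mu> t))
    * ((\<i> * of_real (2 * \<alpha> t) - of_real ((2 * \<alpha> t * x + \<delta> t)\<^sup>2)) * chi (\<beta> t * x + \<epsilon> t) (\<gamma> t)
       + 2 * \<i> * of_real (\<beta> t * (2 * \<alpha> t * x + \<delta> t)) * chi_x (\<beta> t * x + \<epsilon> t) (\<gamma> t)
       + of_real ((\<beta> t)\<^sup>2) * chi_xx (\<beta> t * x + \<epsilon> t) (\<gamma> t))" for x t
  show ?thesis
  proof (rule exI[of _ psi_t], rule exI[of _ psi_x], rule exI[of _ psi_xx], intro allI ballI conjI)
    fix x t assume t: "t \<in> T"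
    show "((\<lambda>s. \<psi> x s) has_vector_derivative psi_t x t) (at t)"
      unfolding psi_eq psi_t_def
      by (intro gauge_ansatz_time_derivative d_alpha d_delta d_kappa d_beta d_eps d_gamma d_mu
          mu_pos t chi_diff)
    note space = gauge_ansatz_space_derivatives[where v = "\<lambda>\<xi>. chi \<xi> (\<gamma> t)"
        and v' = "\<lambda>\<xi>. chi_x \<xi> (\<gamma> t)" and v'' = "\<lambda>\<xi>. chi_xx \<xi> (\<gamma> t)", OF chi_partial chi_diff2]
    show "((\<lambda>y. \<psi> y t) has_vector_derivative psi_x x t) (at x)"
      unfolding psi_eq psi_x_def by (rule space(1))
    show "((\<lambda>y. psi_x y t) has_vector_derivative psi_xx x t) (at x)"
      unfolding psi_x_def psi_xx_def by (rule space(2))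
    have "\<mu>' t / (2 * \<mu> t) = 2 * a t * \<alpha> t + d t"
      using alpha_def[OF t] a_nz[OF t] mu_pos[OF t] by (simp add: field_simps)
    then show "\<i> * psi_t x t = - of_real (a t) * psi_xx x t + of_real (b t * x\<^sup>2) * \<psi> x t
        - \<i> * of_real (c t * x) * psi_x x t - \<i> * of_real (d t) * \<psi> x t
        - of_real (f t * x) * \<psi> x t + \<i> * of_real (g t) * psi_x x t"
      unfolding psi_eq psi_t_def psi_x_def psi_xx_def
      by (rule gauge_transform_residual_vanishes[OF chi_eq eq_alpha[OF t] eq_beta[OF t] eq_gamma[OF t]
            eq_delta[OF t] eq_eps[OF t] eq_kappa[OF t]])
  qed
qed

end
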